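(* Every almost reciprocal Puiseux monoid is atomic.
   Context: A Puiseux monoid is an additive submonoid of $(\mathbb{Q}_{\ge 0},+)$. For a positive rational $r = n/d$ in lowest terms, $\mathsf{d}(r) := d$. An almost reciprocal Puiseux monoid is a monoid of the form $\langle \frac{c_n}{d_n} \mid n \in \mathbb{N} \rangle$ (the submonoid of $\mathbb{Q}_{\ge 0}$ generated by these elements), where $(d_n)_{n\ge 1}$ is a strictly increasing sequence of positive integers whose terms are pairwise relatively prime, and $(c_n)_{n \ge 1}$ is a sequence of positive integers with $\gcd(c_n,d_n)=1$ for every $n$. An atom of $M$ is a nonzero element $a$ such that $a = x+y$ with $x,y \in M$ forces $x=0$ or $y=0$; $M$ is atomic if every element is a finite sum of atoms. *)

theory Defs
  imports Complex_Main
begin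

inductive_set gen_monoid :: "rat set \<Rightarrow> rat set" for S :: "rat set" where
  zero: "0 \<in> gen_monoid S"
| add_gen: "x \<in> gen_monoid S \<Longrightarrow> s \<in> S \<Longrightarrow> x + s \<in> gen_monoid S"

definition is_atom :: "rat set \<Rightarrow> rat \<Rightarrow> bool" where
  "is_atom M a \<longleftrightarrow> a \<in> M \<and> a \<noteq> 0 \<and>
     (\<forall>x\<in>M. \<forall>y\<in>M. a = x + y \<longrightarrow> x = 0 \<or> y = 0)"

definition atomic_monoid :: "rat set \<Rightarrow> bool" where
  "atomic_monoid M \<longleftrightarrow> (\<forall>x\<in>M. x \<noteq> 0 \<longrightarrow>
     (\<exists>as. as \<noteq> [] \<and> (\<forall>a\<in>set as. is_atom M a) \<and> sum_list as = x))"

text \<open>Almost reciprocal Puiseux monoid data (sequences indexed from 0 instead of 1).\<close>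
definition almost_reciprocal_data :: "(nat \<Rightarrow> nat) \<Rightarrow> (nat \<Rightarrow> nat) \<Rightarrow> bool" where
  "almost_reciprocal_data c d \<longleftrightarrow>
     strict_mono d \<and> (\<forall>n. 0 < d n) \<and> (\<forall>m n. m \<noteq> n \<longrightarrow> coprime (d m) (d n)) \<and>
     (\<forall>n. 0 < c n \<and> coprime (c n) (d n))"

end

theory Submission
  imports Defs
begin

text \<open>Let \<open>g n = c n / d n\<close>. If some generator \<open>g n\<close> is not an atom, positivity forces it to be a
sum of generators \<open>g m\<close> with \<open>m \<noteq> n\<close>. Multiplying by the product \<open>P\<close> of their denominators gives
an integer, so \<open>d n\<close> divides \<open>P c n\<close>, hence \<open>P\<close>; as \<open>d n\<close> is coprime to \<open>P\<close>, this means \<open>d n = 1\<close>.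
Since the \<open>d n\<close> are distinct, at most one generator fails to be an atom, and that one is a sum of
the others. So every generator, and hence every element, is a sum of atoms.\<close>

lemma gen_monoid_range_iff:
  "x \<in> gen_monoid (range g) \<longleftrightarrow> (\<exists>ns. x = sum_list (map g ns))"
proof
  assume "x \<in> gen_monoid (range g)"
  then show "\<exists>ns. x = sum_list (map g ns)"
  proof (induction rule: gen_monoid.induct)
    case zero
    show ?case by (rule exI[of _ "[]"]) simp
  next
    case (add_gen x s)
    then obtain ns m where "x = sum_list (map g ns)" "s = g m" by auto
    then show ?case by (intro exI[of _ "ns @ [m]"]) simp
  qed
next
  have "sum_list (map g ns) \<in> gen_monoid (range g)" for ns
  proof (induction ns rule: rev_induct)
    case Nil
    show ?case by (simp add: gen_monoid.zero)
  next
    case (snoc m ns)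
    then show ?case by (simp add: gen_monoid.add_gen)
  qed
  then show "\<exists>ns. x = sum_list (map g ns) \<Longrightarrow> x \<in> gen_monoid (range g)" by blast
qed

lemma generator_in_gen_monoid: "s \<in> S \<Longrightarrow> s \<in> gen_monoid S"
  using gen_monoid.add_gen[OF gen_monoid.zero] by simp

lemma atomic_gen_monoidI:
  assumes "\<And>s. s \<in> S \<Longrightarrow> \<exists>as. (\<forall>a\<in>set as. is_atom (gen_monoid S) a) \<and> sum_list as = s"
  shows "atomic_monoid (gen_monoid S)"
  unfolding atomic_monoid_def
proof (intro ballI impI)
  fix x assume "x \<in> gen_monoid S" "x \<noteq> 0"
  have "\<exists>as. (\<forall>a\<in>set as. is_atom (gen_monoid S) a) \<and> sum_list as = x"
    using \<open>x \<in> gen_monoid S\<close>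
  proof (induction rule: gen_monoid.induct)
    case zero
    show ?case by (rule exI[of _ "[]"]) simp
  next
    case (add_gen x s)
    obtain as where "\<forall>a\<in>set as. is_atom (gen_monoid S) a" "sum_list as = x"
      using add_gen.IH by blast
    moreover obtain bs where "\<forall>a\<in>set bs. is_atom (gen_monoid S) a" "sum_list bs = s"
      using assms[OF add_gen.hyps(2)] by blast
    ultimately show ?case by (intro exI[of _ "as @ bs"]) (simp, blast)
  qed
  then obtain as where "\<forall>a\<in>set as. is_atom (gen_monoid S) a" "sum_list as = x"
    by blast
  moreover from this(2) have "as \<noteq> []"
    using \<open>x \<noteq> 0\<close> by auto
  ultimately show "\<exists>as. as \<noteq> [] \<and> (\<forall>a\<in>set as. is_atom (gen_monoid S) a) \<and> sum_list as = x"
    by blast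
qed

lemma non_atom_generator_eq_sum_of_others:
  fixes g :: "nat \<Rightarrow> rat"
  assumes pos: "\<And>m. 0 < g m" and not_atom: "\<not> is_atom (gen_monoid (range g)) (g n)"
  shows "\<exists>ns. n \<notin> set ns \<and> g n = sum_list (map g ns)"
proof -
  have "g n \<in> gen_monoid (range g)" "g n \<noteq> 0"
    using generator_in_gen_monoid pos[of n] by auto
  then obtain x y where xy: "x \<in> gen_monoid (range g)" "y \<in> gen_monoid (range g)"
    "g n = x + y" "x \<noteq> 0" "y \<noteq> 0"
    using not_atom unfolding is_atom_def by blast
  obtain xs ys where x: "x = sum_list (map g xs)" and y: "y = sum_list (map g ys)"
    using xy(1,2) unfolding gen_monoid_range_iff by blast
  have sum_pos: "0 < sum_list (map g ms)" if "sum_list (map g ms) \<noteq> 0" for ms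
    using that sum_list_nonneg[of "map g ms"] pos by (fastforce intro: less_imp_le)
  have "g m \<le> sum_list (map g ms)" if "m \<in> set ms" for m ms
    using that pos by (intro member_le_sum_list) (auto intro: less_imp_le)
  then have "n \<notin> set xs" "n \<notin> set ys"
    using sum_pos xy(3-5) unfolding x y by force+
  then show ?thesis
    using xy(3) unfolding x y by (intro exI[of _ "xs @ ys"]) simp
qed

lemma of_nat_mult_sum_fractions_in_Ints:
  assumes "\<And>m. m \<in> set ns \<Longrightarrow> d m dvd N"
  shows "of_nat N * sum_list (map (\<lambda>m. of_nat (c m) / of_nat (d m)) ns) \<in> (\<int> :: 'a :: field_char_0 set)"
  using assms
proof (induction ns)
  case Nil
  show ?case by simp
next
  case (Cons m ns)
  then obtain k where k: "N = d m * k" by auto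
  have "of_nat N * (of_nat (c m) / of_nat (d m) :: 'a) \<in> \<int>"
  proof (cases "d m = 0")
    case False
    then have "of_nat N * (of_nat (c m) / of_nat (d m) :: 'a) = of_nat (c m * k)"
      by (simp add: k)
    then show ?thesis by simp
  qed simp
  then show ?case
    using Cons by (simp add: distrib_left)
qed

lemma dvd_if_of_nat_mult_fraction_in_Ints:
  fixes a b N :: nat
  assumes "coprime a b" "b \<noteq> 0" "of_nat N * (of_nat a / of_nat b :: 'a :: field_char_0) \<in> \<int>"
  shows "b dvd N"
proof -
  obtain k where "of_nat N * (of_nat a / of_nat b :: 'a) = of_int k"
    using assms(3) by (auto elim: Ints_cases)
  then have "(of_int (int N * int a) :: 'a) = of_int (int b * k)"
    using assms(2) by (simp add: field_simps)
  then have "int b dvd int (N * a)"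
    unfolding of_int_eq_iff by simp
  then have "b dvd N * a"
    by (simp only: of_nat_dvd_iff)
  then show ?thesis
    using assms(1) by (simp add: coprime_commute coprime_dvd_mult_left_iff)
qed

context
  fixes c d :: "nat \<Rightarrow> nat"
  assumes data: "almost_reciprocal_data c d"
begin

private abbreviation g :: "nat \<Rightarrow> rat" where
  "g n \<equiv> of_nat (c n) / of_nat (d n)"

lemma almost_reciprocal_generator_pos: "0 < g n"
  using data unfolding almost_reciprocal_data_def by auto

lemma almost_reciprocal_generator_is_atom:
  assumes "d n \<noteq> 1"
  shows "is_atom (gen_monoid (range g)) (g n)"
proof (rule ccontr)
  assume "\<not> is_atom (gen_monoid (range g)) (g n)"
  then obtain ns where ns: "n \<notin> set ns" "g n = sum_list (map g ns)"
    using non_atom_generator_eq_sum_of_others[of g, OF almost_reciprocal_generator_pos] by blast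
  define P where "P = (\<Prod>m\<in>set ns. d m)"
  have "of_nat P * g n \<in> \<int>"
    unfolding ns(2) P_def by (rule of_nat_mult_sum_fractions_in_Ints) (simp add: dvd_prodI)
  then have "d n dvd P"
    using data unfolding almost_reciprocal_data_def
    by (intro dvd_if_of_nat_mult_fraction_in_Ints) auto
  moreover have "coprime P (d n)"
    unfolding P_def using data ns(1) unfolding almost_reciprocal_data_def
    by (intro prod_coprime_left) (metis)
  ultimately show False
    using assms coprime_common_divisor_nat[of P "d n" "d n"] by simp
qed

lemma almost_reciprocal_generator_sum_of_atoms:
  "\<exists>as. (\<forall>a\<in>set as. is_atom (gen_monoid (range g)) a) \<and> sum_list as = g n"
proof (cases "is_atom (gen_monoid (range g)) (g n)")
  case True
  then show ?thesis by (intro exI[of _ "[g n]"]) simp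
next
  case False
  then obtain ns where ns: "n \<notin> set ns" "g n = sum_list (map g ns)"
    using non_atom_generator_eq_sum_of_others[of g, OF almost_reciprocal_generator_pos] by blast
  have "d n = 1"
    using False almost_reciprocal_generator_is_atom by blast
  moreover have "inj d"
    using data strict_mono_imp_inj_on unfolding almost_reciprocal_data_def by blast
  ultimately have "d m \<noteq> 1" if "m \<in> set ns" for m
    using that ns(1) by (metis injD)
  then have "\<forall>m\<in>set ns. is_atom (gen_monoid (range g)) (g m)"
    using almost_reciprocal_generator_is_atom by blast
  then show ?thesis
    using ns(2) by (intro exI[of _ "map g ns"]) simp
qed

end

theorem corollary3p6:
  fixes c d :: "nat \<Rightarrow> nat"
  assumes "almost_reciprocal_data c d"
  shows "atomic_monoid (gen_monoid (range (\<lambda>n. of_nat (c n) / of_nat (d n) :: rat)))"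
  using almost_reciprocal_generator_sum_of_atoms[OF assms]
  by (intro atomic_gen_monoidI) auto

end
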